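(* Fix $i\in[n]$, arbitrary bid profiles $\mathbf{b}_{-i}^{(1)},\dots,\mathbf{b}_{-i}^{(T)}\in B^{n-1}$, and auction formats $\mathcal{M}^{(1)},\dots,\mathcal{M}^{(T)}$ all satisfying allocation monotonicity. Then \[ \max_{s\in\mathcal{S}}\sum_{t\in[T]}u_i^{(t)}(s)=\max_{s\in\mathcal{S}^\dagger}\sum_{t\in[T]}u_i^{(t)}(s). \] Consequently, for any strategies $s_i^{(1)},\dots,s_i^{(T)}\in\mathcal{S}$, $\mathrm{Reg}_i^\dagger=\mathrm{Reg}_i$, where $\mathrm{Reg}_i:=\max_{s\in\mathcal{S}}\sum_t(u_i^{(t)}(s)-u_i^{(t)}(s_i^{(t)}))$ and $\mathrm{Reg}_i^\dagger:=\max_{s\in\mathcal{S}^\dagger}\sum_t(u_i^{(t)}(s)-u_i^{(t)}(s_i^{(t)}))$.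
   Context: Bidder $i$'s value $v_i\in[0,1]$ is drawn from a continuous distribution $\mathcal{D}_i$ on $[0,1]$. The bid set is $B:=\{j/K: j=0,\dots,K\}$. $\mathcal{S}$ is the set of all (measurable) functions $s:[0,1]\to B$ and $\mathcal{S}^\dagger\subseteq\mathcal{S}$ the monotone ones ($v\le v'\Rightarrow s(v)\le s(v')$). An auction format is $\mathcal{M}^{(t)}=(\mathbf{x}^{(t)},\mathbf{p}^{(t)})$ with $\mathbf{x}^{(t)}:B^n\to\Delta([n])$ (nonnegative entries summing to at most 1) and $\mathbf{p}^{(t)}:B^n\to[0,1]^n$. Allocation monotonicity: for all $i$, $\mathbf{b}_{-i}\in B^{n-1}$ and $b_i\le b_i'$ in $B$, $x_i^{(t)}(b_i,\mathbf{b}_{-i})\le x_i^{(t)}(b_i',\mathbf{b}_{-i})$. Utility: $u_i^{(t)}(s):=\mathbb{E}_{v_i\sim\mathcal{D}_i}[x_i^{(t)}(s(v_i),\mathbf{b}_{-i}^{(t)})v_i-p_i^{(t)}(s(v_i),\mathbf{b}_{-i}^{(t)})]$. *)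

theory Defs
  imports "HOL-Probability.Probability"
begin

definition bidset :: "nat \<Rightarrow> real set" where
  "bidset K = {real j / real K | j. j \<le> K}"

definition strategies :: "nat \<Rightarrow> (real \<Rightarrow> real) set" where
  "strategies K = {s. s \<in> borel_measurable borel \<and> (\<forall>v. s v \<in> bidset K)}"

definition mono_strategies :: "nat \<Rightarrow> (real \<Rightarrow> real) set" where
  "mono_strategies K = {s \<in> strategies K. \<forall>v\<in>{0..1}. \<forall>v'\<in>{0..1}. v \<le> v' \<longrightarrow> s v \<le> s v'}"

definition bid_profile :: "nat \<Rightarrow> nat \<Rightarrow> (nat \<Rightarrow> real) \<Rightarrow> bool" where
  "bid_profile K n b \<longleftrightarrow> (\<forall>j<n. b j \<in> bidset K)"

definition others_profile :: "nat \<Rightarrow> nat \<Rightarrow> nat \<Rightarrow> (nat \<Rightarrow> real) \<Rightarrow> bool" where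
  "others_profile K n i b \<longleftrightarrow> (\<forall>j<n. j \<noteq> i \<longrightarrow> b j \<in> bidset K)"

definition auction_format :: "nat \<Rightarrow> nat \<Rightarrow> ((nat \<Rightarrow> real) \<Rightarrow> nat \<Rightarrow> real)
     \<Rightarrow> ((nat \<Rightarrow> real) \<Rightarrow> nat \<Rightarrow> real) \<Rightarrow> bool" where
  "auction_format K n x p \<longleftrightarrow>
     (\<forall>b. bid_profile K n b \<longrightarrow>
        (\<forall>j<n. 0 \<le> x b j) \<and> (\<Sum>j<n. x b j) \<le> 1 \<and> (\<forall>j<n. 0 \<le> p b j \<and> p b j \<le> 1))"

definition alloc_monotone :: "nat \<Rightarrow> nat \<Rightarrow> ((nat \<Rightarrow> real) \<Rightarrow> nat \<Rightarrow> real) \<Rightarrow> bool" where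
  "alloc_monotone K n x \<longleftrightarrow>
     (\<forall>j<n. \<forall>b. bid_profile K n b \<longrightarrow>
        (\<forall>c\<in>bidset K. \<forall>c'\<in>bidset K. c \<le> c' \<longrightarrow> x (b(j := c)) j \<le> x (b(j := c')) j))"

definition continuous_dist_01 :: "real measure \<Rightarrow> bool" where
  "continuous_dist_01 D \<longleftrightarrow> prob_space D \<and> sets D = sets borel \<and>
     measure D {0..1} = 1 \<and> (\<forall>v. measure D {v} = 0)"

definition utility :: "real measure \<Rightarrow> ((nat \<Rightarrow> real) \<Rightarrow> nat \<Rightarrow> real)
     \<Rightarrow> ((nat \<Rightarrow> real) \<Rightarrow> nat \<Rightarrow> real) \<Rightarrow> nat \<Rightarrow> (nat \<Rightarrow> real) \<Rightarrow> (real \<Rightarrow> real) \<Rightarrow> real" where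
  "utility D x p i bmi s =
     (\<integral>v. x (bmi(i := s v)) i * v - p (bmi(i := s v)) i \<partial>D)"

end

theory Submission imports Defs begin

text \<open>Against fixed opponents, the total utility of a strategy \<open>s\<close> is the expectation of
  \<open>a (s v) * v - q (s v)\<close>, where \<open>a c\<close> and \<open>q c\<close> are the allocation and payment of the bid \<open>c\<close>
  summed over the rounds. By allocation monotonicity \<open>a\<close> is monotone, so the payoff
  \<open>a c * v - q c\<close> has increasing differences in \<open>(c, v)\<close>. Hence choosing, for every value \<open>v\<close>, the
  largest bid maximising this payoff gives a monotone strategy that is a pointwise, and thus
  an overall, best response among all strategies. A regret is the total utility shifted by a
  constant, so the two regrets agree as well.\<close>

lemma finite_bidset: "finite (bidset K)"
proof -
  have "bidset K = (\<lambda>j. real j / real K) ` {..K}"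
    unfolding bidset_def by auto
  then show ?thesis by simp
qed

lemma zero_in_bidset: "0 \<in> bidset K"
  unfolding bidset_def by force

lemma mono_strategies_subset: "mono_strategies K \<subseteq> strategies K"
  unfolding mono_strategies_def by auto

lemma strategy_bid_mem: "s \<in> strategies K \<Longrightarrow> s v \<in> bidset K"
  unfolding strategies_def by blast

lemma mono_strategiesI:
  assumes "mono s" "\<And>v. s v \<in> bidset K"
  shows "s \<in> mono_strategies K"
  unfolding mono_strategies_def strategies_def
  using borel_measurable_mono assms monoD by blast

lemma borel_measurable_comp_strategy:
  fixes h :: "real \<Rightarrow> real"
  assumes "s \<in> strategies K"
  shows "(\<lambda>v. h (s v)) \<in> borel_measurable borel"
proof -
  have "finite (s ` space borel)"
    using assms finite_bidset unfolding strategies_def by (auto intro: finite_subset)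
  moreover have "s \<in> borel_measurable borel"
    using assms unfolding strategies_def by blast
  ultimately have "simple_function borel s"
    by (rule simple_function_borel_measurable[rotated])
  then show ?thesis
    by (rule borel_measurable_simple_function[OF simple_function_compose1])
qed

lemma integrable_bid_payoff:
  fixes a q :: "real \<Rightarrow> real"
  assumes D: "continuous_dist_01 D" and s: "s \<in> strategies K"
    and a: "\<And>c. c \<in> bidset K \<Longrightarrow> \<bar>a c\<bar> \<le> M"
    and q: "\<And>c. c \<in> bidset K \<Longrightarrow> \<bar>q c\<bar> \<le> M"
  shows "integrable D (\<lambda>v. a (s v) * v - q (s v))"
proof -
  interpret prob_space D
    using D unfolding continuous_dist_01_def by simp
  have sets_D: "sets D = sets borel"
    using D unfolding continuous_dist_01_def by simp
  have "(\<lambda>v. a (s v) * v - q (s v)) \<in> borel_measurable borel"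
    using borel_measurable_comp_strategy[OF s, of a] borel_measurable_comp_strategy[OF s, of q]
    by measurable
  then have meas: "(\<lambda>v. a (s v) * v - q (s v)) \<in> borel_measurable D"
    by (simp add: measurable_cong_sets[OF sets_D refl])
  have "AE v in D. v \<in> {0..1}"
    using D unfolding continuous_dist_01_def by (subst AE_in_set_eq_1) (auto simp: sets_D)
  then have "AE v in D. norm (a (s v) * v - q (s v)) \<le> norm (2 * M)"
  proof (rule AE_mp, intro AE_I2 impI)
    fix v :: real
    assume "v \<in> {0..1}"
    then have "\<bar>a (s v)\<bar> * v \<le> \<bar>a (s v)\<bar>"
      by (simp add: mult_left_le)
    then have "\<bar>a (s v) * v\<bar> \<le> M"
      using a[OF strategy_bid_mem[OF s, of v]] \<open>v \<in> {0..1}\<close> by (simp add: abs_mult)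
    then show "norm (a (s v) * v - q (s v)) \<le> norm (2 * M)"
      using q[OF strategy_bid_mem[OF s, of v]] by (simp add: abs_le_iff)
  qed
  then show ?thesis
    by (rule Bochner_Integration.integrable_bound[OF integrable_const meas])
qed

lemma bid_profile_update_own_bid:
  assumes "i < n" "others_profile K n i b" "c \<in> bidset K"
  shows "bid_profile K n (b(i := c))"
  using assms unfolding bid_profile_def others_profile_def by auto

lemma auction_format_own_outcome_bounded:
  assumes "auction_format K n x p" "i < n" "others_profile K n i b" "c \<in> bidset K"
  shows "\<bar>x (b(i := c)) i\<bar> \<le> 1" "\<bar>p (b(i := c)) i\<bar> \<le> 1"
proof -
  let ?b = "b(i := c)"
  have nonneg: "\<forall>j<n. 0 \<le> x ?b j" and total: "(\<Sum>j<n. x ?b j) \<le> 1"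
    and pay: "0 \<le> p ?b i \<and> p ?b i \<le> 1"
    using assms bid_profile_update_own_bid[OF assms(2-4)] unfolding auction_format_def by blast+
  have "x ?b i \<le> (\<Sum>j<n. x ?b j)"
    using nonneg \<open>i < n\<close> by (intro member_le_sum) auto
  then show "\<bar>x ?b i\<bar> \<le> 1" "\<bar>p ?b i\<bar> \<le> 1"
    using nonneg total pay \<open>i < n\<close> by auto
qed

lemma alloc_monotone_own_bid:
  assumes "alloc_monotone K n x" "i < n" "others_profile K n i b"
    and "c \<in> bidset K" "c' \<in> bidset K" "c \<le> c'"
  shows "x (b(i := c)) i \<le> x (b(i := c')) i"
  using assms bid_profile_update_own_bid[OF assms(2,3,4)]
  unfolding alloc_monotone_def by (metis fun_upd_upd)

definition greatest_maximizer :: "'a::linorder set \<Rightarrow> ('a \<Rightarrow> 'b::linorder) \<Rightarrow> 'a" where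
  "greatest_maximizer C f = Max {c \<in> C. \<forall>c'\<in>C. f c' \<le> f c}"

lemma
  fixes f :: "'a::linorder \<Rightarrow> 'b::linorder"
  assumes "finite C" "C \<noteq> {}"
  shows greatest_maximizer_mem: "greatest_maximizer C f \<in> C"
    and greatest_maximizer_max: "c \<in> C \<Longrightarrow> f c \<le> f (greatest_maximizer C f)"
    and greatest_maximizer_greatest:
      "c \<in> C \<Longrightarrow> \<forall>c'\<in>C. f c' \<le> f c \<Longrightarrow> c \<le> greatest_maximizer C f"
proof -
  let ?Opt = "{c \<in> C. \<forall>c'\<in>C. f c' \<le> f c}"
  have "f ` C \<noteq> {}" "finite (f ` C)"
    using assms by auto
  then obtain c\<^sub>0 where "c\<^sub>0 \<in> C" "f c\<^sub>0 = Max (f ` C)"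
    by (metis Max_in imageE)
  then have "c\<^sub>0 \<in> ?Opt"
    using assms(1) by auto
  then have "finite ?Opt" "?Opt \<noteq> {}"
    using assms(1) by auto
  then have "greatest_maximizer C f \<in> ?Opt"
    unfolding greatest_maximizer_def by (rule Max_in)
  then show "greatest_maximizer C f \<in> C" "c \<in> C \<Longrightarrow> f c \<le> f (greatest_maximizer C f)"
    by auto
  show "c \<le> greatest_maximizer C f" if "c \<in> C" "\<forall>c'\<in>C. f c' \<le> f c"
    unfolding greatest_maximizer_def using that \<open>finite ?Opt\<close> by (intro Max_ge) auto
qed

text \<open>Monotone comparative statics: \<open>a c * v - q c\<close> has increasing differences, so if the larger
  bid were optimal at the smaller value, it would remain optimal at the larger one.\<close>

lemma mono_greatest_maximizer_affine:
  fixes a q :: "real \<Rightarrow> real"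
  assumes C: "finite C" "C \<noteq> {}" and a: "mono_on C a"
  shows "mono (\<lambda>v. greatest_maximizer C (\<lambda>c. a c * v - q c))"
proof (rule monoI, rule ccontr)
  fix v v' :: real
  define c where "c = greatest_maximizer C (\<lambda>c. a c * v - q c)"
  define c' where "c' = greatest_maximizer C (\<lambda>c. a c * v' - q c)"
  assume "v \<le> v'" and "\<not> c \<le> c'"
  have mem: "c \<in> C" "c' \<in> C"
    unfolding c_def c'_def using greatest_maximizer_mem[OF C] by auto
  have opt_v: "a c' * v - q c' \<le> a c * v - q c"
    unfolding c_def using greatest_maximizer_max[OF C mem(2)] .
  have "(a c - a c') * v \<le> (a c - a c') * v'"
    using a mem \<open>\<not> c \<le> c'\<close> \<open>v \<le> v'\<close> by (intro mult_left_mono) (auto dest: mono_onD)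
  with opt_v have gain: "a c' * v' - q c' \<le> a c * v' - q c"
    by (simp add: left_diff_distrib)
  have "\<forall>d\<in>C. a d * v' - q d \<le> a c * v' - q c"
  proof
    fix d
    assume "d \<in> C"
    then have "a d * v' - q d \<le> a c' * v' - q c'"
      unfolding c'_def by (rule greatest_maximizer_max[OF C])
    with gain show "a d * v' - q d \<le> a c * v' - q c"
      by linarith
  qed
  then have "c \<le> c'"
    unfolding c'_def by (rule greatest_maximizer_greatest[OF C mem(1)])
  with \<open>\<not> c \<le> c'\<close> show False ..
qed

definition cumulative_outcome ::
    "nat \<Rightarrow> (nat \<Rightarrow> (nat \<Rightarrow> real) \<Rightarrow> nat \<Rightarrow> real) \<Rightarrow> nat \<Rightarrow> (nat \<Rightarrow> nat \<Rightarrow> real) \<Rightarrow> real \<Rightarrow> real"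
  where "cumulative_outcome T f i bmi c = (\<Sum>t<T. f t ((bmi t)(i := c)) i)"

lemma abs_cumulative_outcome_le:
  fixes T :: nat
  assumes "\<And>t. t < T \<Longrightarrow> \<bar>f t ((bmi t)(i := c)) i\<bar> \<le> 1"
  shows "\<bar>cumulative_outcome T f i bmi c\<bar> \<le> real T"
proof -
  have "\<bar>cumulative_outcome T f i bmi c\<bar> \<le> (\<Sum>t<T. \<bar>f t ((bmi t)(i := c)) i\<bar>)"
    unfolding cumulative_outcome_def by (rule sum_abs)
  also have "\<dots> \<le> real T"
    using sum_bounded_above[of "{..<T}" _ "1 :: real"] assms by simp
  finally show ?thesis .
qed

lemma mono_on_cumulative_alloc:
  fixes T :: nat
  assumes "i < n" "\<And>t. t < T \<Longrightarrow> others_profile K n i (bmi t)"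
    and "\<And>t. t < T \<Longrightarrow> alloc_monotone K n (x t)"
  shows "mono_on (bidset K) (cumulative_outcome T x i bmi)"
  unfolding cumulative_outcome_def using assms
  by (intro mono_onI sum_mono) (auto intro: alloc_monotone_own_bid)

lemma sum_utility_eq_integral:
  fixes T :: nat
  assumes i: "i < n" and D: "continuous_dist_01 D" and s: "s \<in> strategies K"
    and bmi: "\<And>t. t < T \<Longrightarrow> others_profile K n i (bmi t)"
    and fmt: "\<And>t. t < T \<Longrightarrow> auction_format K n (x t) (p t)"
  shows "(\<Sum>t<T. utility D (x t) (p t) i (bmi t) s)
    = (\<integral>v. cumulative_outcome T x i bmi (s v) * v - cumulative_outcome T p i bmi (s v) \<partial>D)"
proof -
  have "integrable D (\<lambda>v. x t ((bmi t)(i := s v)) i * v - p t ((bmi t)(i := s v)) i)"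
    if "t < T" for t
    using auction_format_own_outcome_bounded[OF fmt[OF that] i bmi[OF that]]
    by (intro integrable_bid_payoff[OF D s])
  then have "(\<Sum>t<T. utility D (x t) (p t) i (bmi t) s)
      = (\<integral>v. (\<Sum>t<T. x t ((bmi t)(i := s v)) i * v - p t ((bmi t)(i := s v)) i) \<partial>D)"
    unfolding utility_def by (intro Bochner_Integration.integral_sum[symmetric]) auto
  then show ?thesis
    by (simp add: cumulative_outcome_def sum_subtractf sum_distrib_right)
qed

lemma exists_mono_best_response:
  fixes T :: nat
  assumes i: "i < n" and D: "continuous_dist_01 D"
    and bmi: "\<And>t. t < T \<Longrightarrow> others_profile K n i (bmi t)"
    and fmt: "\<And>t. t < T \<Longrightarrow> auction_format K n (x t) (p t)"
    and mono: "\<And>t. t < T \<Longrightarrow> alloc_monotone K n (x t)"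
  shows "\<exists>\<sigma>\<in>mono_strategies K. \<forall>s\<in>strategies K.
    (\<Sum>t<T. utility D (x t) (p t) i (bmi t) s) \<le> (\<Sum>t<T. utility D (x t) (p t) i (bmi t) \<sigma>)"
proof -
  let ?a = "cumulative_outcome T x i bmi" and ?q = "cumulative_outcome T p i bmi"
  define \<sigma> where "\<sigma> v = greatest_maximizer (bidset K) (\<lambda>c. ?a c * v - ?q c)" for v
  have B: "finite (bidset K)" "bidset K \<noteq> {}"
    using finite_bidset zero_in_bidset by blast+
  have \<sigma>_bid: "\<sigma> v \<in> bidset K" for v
    unfolding \<sigma>_def using greatest_maximizer_mem[OF B] .
  have "mono \<sigma>"
    unfolding \<sigma>_def using mono_greatest_maximizer_affine[OF B mono_on_cumulative_alloc[OF i bmi mono]] .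
  then have \<sigma>: "\<sigma> \<in> mono_strategies K"
    using \<sigma>_bid by (rule mono_strategiesI)
  then have \<sigma>_strategy: "\<sigma> \<in> strategies K"
    using mono_strategies_subset by blast
  have "(\<Sum>t<T. utility D (x t) (p t) i (bmi t) s) \<le> (\<Sum>t<T. utility D (x t) (p t) i (bmi t) \<sigma>)"
    if s: "s \<in> strategies K" for s
  proof -
    have bounded: "\<bar>?a c\<bar> \<le> real T" "\<bar>?q c\<bar> \<le> real T" if "c \<in> bidset K" for c
      using auction_format_own_outcome_bounded[OF fmt i bmi that]
      by (auto intro: abs_cumulative_outcome_le)
    have pointwise: "?a (s v) * v - ?q (s v) \<le> ?a (\<sigma> v) * v - ?q (\<sigma> v)" for v
      unfolding \<sigma>_def using B strategy_bid_mem[OF s] by (rule greatest_maximizer_max)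
    have "(\<integral>v. ?a (s v) * v - ?q (s v) \<partial>D) \<le> (\<integral>v. ?a (\<sigma> v) * v - ?q (\<sigma> v) \<partial>D)"
      using integrable_bid_payoff[OF D s bounded] integrable_bid_payoff[OF D \<sigma>_strategy bounded]
        pointwise by (rule integral_mono)
    then show ?thesis
      using sum_utility_eq_integral[OF i D _ bmi fmt] s \<sigma>_strategy by simp
  qed
  with \<sigma> show ?thesis by blast
qed

theorem mainTheorem3:
  fixes K n i T :: nat
    and D :: "real measure"
    and bmi :: "nat \<Rightarrow> nat \<Rightarrow> real"
    and x p :: "nat \<Rightarrow> (nat \<Rightarrow> real) \<Rightarrow> nat \<Rightarrow> real"
  assumes K: "K \<ge> 1"
    and i: "i < n"
    and D: "continuous_dist_01 D"
    and bmi: "\<And>t. t < T \<Longrightarrow> others_profile K n i (bmi t)"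
    and fmt: "\<And>t. t < T \<Longrightarrow> auction_format K n (x t) (p t)"
    and mono: "\<And>t. t < T \<Longrightarrow> alloc_monotone K n (x t)"
  defines "U \<equiv> \<lambda>s. \<Sum>t<T. utility D (x t) (p t) i (bmi t) s"
  shows "(\<exists>s\<in>strategies K. \<forall>s'\<in>strategies K. U s' \<le> U s)
       \<and> (\<exists>s\<in>mono_strategies K. \<forall>s'\<in>mono_strategies K. U s' \<le> U s)
       \<and> (SUP s\<in>strategies K. U s) = (SUP s\<in>mono_strategies K. U s)
       \<and> (\<forall>ss :: nat \<Rightarrow> real \<Rightarrow> real. (\<forall>t<T. ss t \<in> strategies K) \<longrightarrow>
            (SUP s\<in>mono_strategies K. \<Sum>t<T. utility D (x t) (p t) i (bmi t) s
                                             - utility D (x t) (p t) i (bmi t) (ss t))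
          = (SUP s\<in>strategies K. \<Sum>t<T. utility D (x t) (p t) i (bmi t) s
                                             - utility D (x t) (p t) i (bmi t) (ss t)))"
proof -
  let ?u = "\<lambda>t. utility D (x t) (p t) i (bmi t)"
  obtain \<sigma> where \<sigma>: "\<sigma> \<in> mono_strategies K" and best: "\<And>s. s \<in> strategies K \<Longrightarrow> U s \<le> U \<sigma>"
    using exists_mono_best_response[where T = T and x = x and p = p and bmi = bmi, OF i D bmi fmt mono]
    unfolding U_def by blast
  have \<sigma>_strategy: "\<sigma> \<in> strategies K"
    using \<sigma> mono_strategies_subset by blast
  have SUP_shift: "(SUP s\<in>S. U s - r) = U \<sigma> - r" if "\<sigma> \<in> S" "S \<subseteq> strategies K" for S r
    using that best by (intro cSup_eq_maximum) auto
  have regret: "(\<Sum>t<T. ?u t s - ?u t (ss t)) = U s - (\<Sum>t<T. ?u t (ss t))" for s ss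
    unfolding U_def by (simp add: sum_subtractf)
  show ?thesis
    using \<sigma> \<sigma>_strategy best mono_strategies_subset
      SUP_shift[of "strategies K" 0] SUP_shift[of "mono_strategies K" 0]
    by (auto simp: regret SUP_shift)
qed

end
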